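(* Let $s=\sigma+it$ with $\sigma\ge 1/2$ and $t\ge 14.1347$. Then \[ \Big|\zeta(s)-\sum_{1\le n<t}\frac{1}{n^s}\Big|\le c_0\,t^{-\sigma},\qquad c_0=2.1946. \]
   Context: $\zeta$ is the Riemann zeta function. *)

theory Defs
  imports "HOL-Analysis.Analysis"
begin

text \<open>Riemann zeta function on the half-plane Re s > 0, s \<noteq> 1 (its analytic
  continuation there), via the classical formula
  zeta(s) = lim_{N\<rightarrow>\<infinity>} ( sum_{n=1}^N n^(-s) - N^(1-s)/(1-s) ),
  valid for Re s > 0, s \<noteq> 1; for Re s > 1 it is the Dirichlet series sum n^(-s).\<close>
definition riemann_zeta :: "complex \<Rightarrow> complex" where
  "riemann_zeta s = lim (\<lambda>N. (\<Sum>n=1..N. 1 / (of_nat n powr s))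
                           - of_nat N powr (1 - s) / (1 - s))"

end

theory Submission
  imports Defs
begin

(*
  Let M = ceil t, a n = n^-s, l n = ln (1 + 1/n) and c n = 1 / (1 - exp (- s l n)).  Since
  a (n+1) = a n exp (- s l n), we have a n = (a n - a (n+1)) c n, and summation by parts on the
  partial sums defining zeta gives

    zeta s - (SUM n<M. a n) = s/(s-1) (a M (c M - 1/s) + (SUM n>=M. a (n+1) (c (n+1) - c n - 1/s))),

  the boundary terms tending to 0.  Writing 1/(1 - exp (-z)) = 1/z + 1/2 + h z, Taylor bounds for
  sinh and cosh give |h z| <= 0.11 |z| and |h' z| <= 0.12 for Re z > 0, |z| <= 3/2; together with
  1/l n = n + 1/2 + O(1/n) this makes the defects c (n+1) - c n - 1/s small enough for the series
  to telescope against M^-sigma (sqrt (M/n) / |s| + 0.12 |s| l n).  For sigma <= t the result is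
  the constant 1.04 * 1.9315; for sigma > t the Dirichlet series converges absolutely and the
  trivial tail bound M^-sigma (1 + M/(sigma - 1)) suffices.
*)

lemma powr_neg_diff_ge:
  fixes q x :: real
  assumes "0 \<le> q" "1 < x"
  shows "q * (x powr (- q) / x) \<le> (x - 1) powr (- q) - x powr (- q)"
proof -
  have x: "0 < x" "0 < 1 - 1 / x"
    using assms by (auto simp: field_simps)
  have "(x - 1) powr (- q) = (x * (1 - 1 / x)) powr (- q)"
    using x by (simp add: right_diff_distrib)
  also have "\<dots> = x powr (- q) * (1 - 1 / x) powr (- q)"
    using x by (simp add: powr_mult)
  finally have factor: "(x - 1) powr (- q) = x powr (- q) * (1 - 1 / x) powr (- q)" .
  have "q * (1 / x) \<le> q * (- ln (1 - 1 / x))"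
    using ln_le_minus_one[OF x(2)] assms(1) by (intro mult_left_mono) auto
  then have "1 + q / x \<le> exp (- q * ln (1 - 1 / x))"
    using exp_ge_add_one_self[of "- q * ln (1 - 1 / x)"] by simp
  also have "\<dots> = (1 - 1 / x) powr (- q)"
    using x by (simp add: powr_def)
  finally have "x powr (- q) * (1 + q / x) \<le> x powr (- q) * (1 - 1 / x) powr (- q)"
    by (intro mult_left_mono) auto
  then show ?thesis
    unfolding factor by (simp add: algebra_simps)
qed

lemma powr_neg_shift_tendsto_0:
  assumes "0 < c"
  shows "(\<lambda>j. real (M + j) powr (- c)) \<longlonglongrightarrow> 0"
proof -
  have "(\<lambda>j. real j powr (- c)) \<longlonglongrightarrow> 0"
    using assms by (intro tendsto_neg_powr filterlim_real_sequentially) simp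
  from LIMSEQ_ignore_initial_segment[OF this, of M] show ?thesis
    by (simp only: add.commute)
qed

lemma norm_suminf_le_telescope:
  fixes f :: "nat \<Rightarrow> 'a :: banach"
  assumes "\<And>k. norm (f k) \<le> G k - G (Suc k)" "G \<longlonglongrightarrow> 0"
  shows "summable f" "norm (suminf f) \<le> G 0"
proof -
  have sums: "(\<lambda>k. G k - G (Suc k)) sums G 0"
    using telescope_sums'[OF assms(2)] by simp
  then have "summable (\<lambda>k. norm (f k))"
    by (intro summable_comparison_test[OF _ sums_summable]) (use assms(1) in auto)
  then show "summable f"
    by (rule summable_norm_cancel)
  have "norm (suminf f) \<le> (\<Sum>k. norm (f k))"
    by (rule summable_norm) fact
  also have "\<dots> \<le> (\<Sum>k. G k - G (Suc k))"
    using \<open>summable (\<lambda>k. norm (f k))\<close> sums assms(1) by (intro suminf_le) (auto simp: sums_summable)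
  also have "\<dots> = G 0"
    using sums by (simp add: sums_iff)
  finally show "norm (suminf f) \<le> G 0" .
qed

lemma ln_one_plus_ge:
  fixes u :: real
  assumes "0 \<le> u"
  shows "2 * u / (2 + u) \<le> ln (1 + u)"
proof -
  have "(\<lambda>x. ln (1 + x) - 2 * x / (2 + x)) 0 \<le> (\<lambda>x. ln (1 + x) - 2 * x / (2 + x)) u"
  proof (rule deriv_nonneg_imp_mono[where g = "\<lambda>x. ln (1 + x) - 2 * x / (2 + x)"
      and g' = "\<lambda>x. x^2 / ((1 + x) * (2 + x)^2)"])
    fix x :: real
    assume "x \<in> {0..u}"
    then have x: "0 \<le> x" by simp
    have "1 / (1 + x) - 4 / (2 + x)^2 = x^2 / ((1 + x) * (2 + x)^2)"
      using x by (simp add: divide_simps power2_eq_square) (simp add: algebra_simps)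
    moreover have "((\<lambda>x. ln (1 + x) - 2 * x / (2 + x)) has_real_derivative
        1 / (1 + x) - 4 / (2 + x)^2) (at x)"
      using x apply -
      apply (rule derivative_eq_intros refl | simp)+
      apply (simp add: divide_simps power2_eq_square)
      done
    ultimately show "((\<lambda>x. ln (1 + x) - 2 * x / (2 + x)) has_real_derivative
        x^2 / ((1 + x) * (2 + x)^2)) (at x)"
      by simp
    show "0 \<le> x^2 / ((1 + x) * (2 + x)^2)"
      using x by simp
  qed (use assms in auto)
  then show ?thesis by simp
qed

lemma ln_one_plus_le:
  fixes u :: real
  assumes "0 \<le> u"
  shows "ln (1 + u) \<le> u * (2 + u) / (2 * (1 + u))"
proof -
  have "(\<lambda>x. x * (2 + x) / (2 * (1 + x)) - ln (1 + x)) 0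
      \<le> (\<lambda>x. x * (2 + x) / (2 * (1 + x)) - ln (1 + x)) u"
  proof (rule deriv_nonneg_imp_mono[where g = "\<lambda>x. x * (2 + x) / (2 * (1 + x)) - ln (1 + x)"
      and g' = "\<lambda>x. x^2 / (2 * (1 + x)^2)"])
    fix x :: real
    assume "x \<in> {0..u}"
    then have x: "0 \<le> x" by simp
    show "((\<lambda>x. x * (2 + x) / (2 * (1 + x)) - ln (1 + x)) has_real_derivative
        x^2 / (2 * (1 + x)^2)) (at x)"
      using x apply -
      apply (rule derivative_eq_intros refl | simp)+
      apply (simp add: divide_simps power2_eq_square)
      apply (simp add: algebra_simps)
      done
    show "0 \<le> x^2 / (2 * (1 + x)^2)"
      using x by simp
  qed (use assms in auto)
  then show ?thesis by simp
qed

section \<open>The regular part of 1/(1 - exp (- z))\<close>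

lemma exp_taylor_5:
  fixes w :: complex
  shows "norm (exp w - (1 + w + w^2/2 + w^3/6 + w^4/24 + w^5/120)) \<le> exp (norm w) * norm w ^ 6 / 120"
proof -
  have "norm (exp w - (\<Sum>k\<le>5. w ^ k / fact k)) \<le> exp \<bar>Re w\<bar> * norm w ^ Suc 5 / fact 5"
    by (rule Taylor_exp)
  also have "exp \<bar>Re w\<bar> * norm w ^ Suc 5 / fact 5 \<le> exp (norm w) * norm w ^ 6 / 120"
    using abs_Re_le_cmod[of w] by (simp add: fact_numeral divide_right_mono mult_right_mono)
  finally show ?thesis
    by (simp add: atMost_nat_numeral fact_numeral add_ac)
qed

lemma sinh_cosh_taylor_bounds:
  fixes w :: complex
  shows "norm (sinh w - (w + w^3/6 + w^5/120)) \<le> exp (norm w) * norm w ^ 6 / 120"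
    and "norm (cosh w - (1 + w^2/2 + w^4/24)) \<le> exp (norm w) * norm w ^ 6 / 120"
proof -
  define R where "R x = exp x - (1 + x + x^2/2 + x^3/6 + x^4/24 + x^5/120)" for x :: complex
  have R: "norm (R x) \<le> exp (norm w) * norm w ^ 6 / 120" if "x = w \<or> x = - w" for x
    using that exp_taylor_5[of x] by (auto simp: R_def)
  have "sinh w - (w + w^3/6 + w^5/120) = (R w - R (- w)) / 2"
    by (simp add: R_def sinh_field_def field_simps power_minus_odd)
  also have "norm \<dots> \<le> exp (norm w) * norm w ^ 6 / 120"
    using norm_triangle_ineq4[of "R w" "R (- w)"] R[of w] R[of "- w"] by (simp add: norm_divide)
  finally show "norm (sinh w - (w + w^3/6 + w^5/120)) \<le> exp (norm w) * norm w ^ 6 / 120" .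
  have "cosh w - (1 + w^2/2 + w^4/24) = (R w + R (- w)) / 2"
    by (simp add: R_def cosh_field_def field_simps power_minus_odd)
  also have "norm \<dots> \<le> exp (norm w) * norm w ^ 6 / 120"
    using norm_triangle_ineq[of "R w" "R (- w)"] R[of w] R[of "- w"] by (simp add: norm_divide)
  finally show "norm (cosh w - (1 + w^2/2 + w^4/24)) \<le> exp (norm w) * norm w ^ 6 / 120" .
qed

lemma sinh_div_self_taylor_bound:
  fixes w :: complex
  assumes "w \<noteq> 0"
  shows "norm (sinh w / w - 1 - (w^2/6 + w^4/120)) \<le> exp (norm w) * norm w ^ 5 / 120"
proof -
  have "sinh w / w - 1 - (w^2/6 + w^4/120) = (sinh w - (w + w^3/6 + w^5/120)) / w"
    using assms by (simp add: field_simps power_eq_if)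
  also have "norm \<dots> \<le> (exp (norm w) * norm w ^ 6 / 120) / norm w"
    unfolding norm_divide using sinh_cosh_taylor_bounds(1)[of w] by (rule divide_right_mono) simp
  also have "\<dots> = exp (norm w) * norm w ^ 5 / 120"
    using assms by (simp add: field_simps power_eq_if)
  finally show ?thesis .
qed

lemma small_power_bounds:
  fixes r :: real
  assumes "0 \<le> r" "r \<le> 3/4"
  shows "r^4 \<le> 9/16 * r^2" and "exp r * r^5 \<le> 81/64 * r^2" and "exp r * r^6 \<le> 243/256 * r^2"
proof -
  have pow: "r ^ (k + 2) \<le> (3/4) ^ k * r ^ 2" for k
  proof -
    have "r ^ (k + 2) = r ^ k * r ^ 2"
      by (rule power_add)
    also have "\<dots> \<le> (3/4) ^ k * r ^ 2"
      using power_mono[OF assms(2), of k] assms(1) by (intro mult_right_mono) auto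
    finally show ?thesis .
  qed
  have e: "exp r \<le> 3"
    using exp_le exp_le_cancel_iff[of r 1] assms(2) by linarith
  show "r^4 \<le> 9/16 * r^2"
    using pow[of 2] by (simp add: numeral_eq_Suc)
  have "exp r * r^5 \<le> 3 * (27/64 * r^2)"
    using pow[of 3] e assms(1) by (intro mult_mono) (simp_all add: numeral_eq_Suc)
  then show "exp r * r^5 \<le> 81/64 * r^2"
    by simp
  have "exp r * r^6 \<le> 3 * (81/256 * r^2)"
    using pow[of 4] e assms(1) by (intro mult_mono) (simp_all add: numeral_eq_Suc)
  then show "exp r * r^6 \<le> 243/256 * r^2"
    by simp
qed

lemma sinh_div_self_bounds:
  fixes w :: complex
  assumes "w \<noteq> 0" "norm w \<le> 3/4"
  shows "norm (sinh w / w - 1) \<le> 182/1000 * norm w ^ 2"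
    and "norm (cosh w - sinh w / w) \<le> 371/1000 * norm w ^ 2"
proof -
  define r where "r = norm w"
  have r4: "r^4 \<le> 9/16 * r^2" and r5: "exp r * r^5 \<le> 81/64 * r^2" and r6: "exp r * r^6 \<le> 243/256 * r^2"
    using small_power_bounds[of r] assms(2) by (simp_all add: r_def)
  have q: "norm (sinh w / w - 1 - (w^2/6 + w^4/120)) \<le> exp r * r^5 / 120"
    using sinh_div_self_taylor_bound[OF assms(1)] by (simp add: r_def)
  have p: "norm (cosh w - (1 + w^2/2 + w^4/24)) \<le> exp r * r^6 / 120"
    using sinh_cosh_taylor_bounds(2)[of w] by (simp add: r_def)
  have "norm (sinh w / w - 1) \<le> norm (w^2/6 + w^4/120) + exp r * r^5 / 120"
    using norm_triangle_sub[of "sinh w / w - 1" "w^2/6 + w^4/120"] q by simp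
  also have "norm (w^2/6 + w^4/120) \<le> r^2/6 + r^4/120"
    using norm_triangle_ineq[of "w^2/6" "w^4/120"] by (simp add: norm_divide norm_power r_def)
  finally show "norm (sinh w / w - 1) \<le> 182/1000 * norm w ^ 2"
    using r4 r5 zero_le_power2[of r] unfolding r_def[symmetric] by linarith
  have "cosh w - sinh w / w = (w^2/3 + w^4/30) + (cosh w - (1 + w^2/2 + w^4/24))
      - (sinh w / w - 1 - (w^2/6 + w^4/120))"
    by (simp add: field_simps)
  also have "norm \<dots> \<le> norm (w^2/3 + w^4/30) + exp r * r^6 / 120 + exp r * r^5 / 120"
    using norm_triangle_ineq4[of "(w^2/3 + w^4/30) + (cosh w - (1 + w^2/2 + w^4/24))"
        "sinh w / w - 1 - (w^2/6 + w^4/120)"]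
      norm_triangle_ineq[of "w^2/3 + w^4/30" "cosh w - (1 + w^2/2 + w^4/24)"] p q
    by linarith
  also have "norm (w^2/3 + w^4/30) \<le> r^2/3 + r^4/30"
    using norm_triangle_ineq[of "w^2/3" "w^4/30"] by (simp add: norm_divide norm_power r_def)
  finally show "norm (cosh w - sinh w / w) \<le> 371/1000 * norm w ^ 2"
    using r4 r5 r6 zero_le_power2[of r] unfolding r_def[symmetric] by linarith
qed

definition laurent_tail :: "complex \<Rightarrow> complex" where
  "laurent_tail z = 1 / (1 - exp (- z)) - 1 / z - 1 / 2"

definition laurent_tail' :: "complex \<Rightarrow> complex" where
  "laurent_tail' z = 1 / z^2 - exp (- z) / (1 - exp (- z))^2"

lemma has_field_derivative_laurent_tail:
  assumes "0 < Re z"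
  shows "(laurent_tail has_field_derivative laurent_tail' z) (at z)"
proof -
  have "z \<noteq> 0" "1 - exp (- z) \<noteq> 0"
    using assms by (auto simp: exp_eq_1)
  then show ?thesis
    unfolding laurent_tail_def[abs_def] laurent_tail'_def
    by (auto intro!: derivative_eq_intros simp: power2_eq_square)
qed

lemma one_minus_exp_double: "1 - exp (- (2 * w)) = 2 * exp (- w) * sinh (w :: complex)"
  by (simp add: sinh_field_def algebra_simps flip: exp_add)

(* Halving the argument makes both functions rational in cosh w and sinh w / w, whose deviations
   from 1 are controlled by sinh_div_self_bounds. *)
lemma laurent_tail_double:
  fixes w :: complex
  assumes "w \<noteq> 0" "sinh w \<noteq> 0"
  shows "laurent_tail (2 * w) = (cosh w - sinh w / w) / (2 * w * (sinh w / w))"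
    and "laurent_tail' (2 * w) = (sinh w / w - 1) * (sinh w / w + 1) / (4 * w^2 * (sinh w / w)^2)"
proof -
  have inv: "1 / (1 - exp (- (2 * w))) = (cosh w + sinh w) / (2 * sinh w)"
    unfolding one_minus_exp_double cosh_plus_sinh using assms by (simp add: exp_minus field_simps)
  show "laurent_tail (2 * w) = (cosh w - sinh w / w) / (2 * w * (sinh w / w))"
    unfolding laurent_tail_def inv using assms by (simp add: field_simps)
  have "exp (- (2 * w)) = exp (- w) ^ 2"
    by (simp add: power2_eq_square flip: exp_add)
  then have exp_quot: "exp (- (2 * w)) / (1 - exp (- (2 * w)))^2 = 1 / (4 * sinh w ^ 2)"
    unfolding one_minus_exp_double by (simp add: power_mult_distrib)
  show "laurent_tail' (2 * w) = (sinh w / w - 1) * (sinh w / w + 1) / (4 * w^2 * (sinh w / w)^2)"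
    unfolding laurent_tail'_def exp_quot using assms by (simp add: field_simps power2_eq_square)
qed

lemma laurent_tail_bounds:
  fixes z :: complex
  assumes "z \<noteq> 0" "norm z \<le> 3/2"
  shows "norm (laurent_tail z) \<le> 11/100 * norm z"
    and "norm (laurent_tail' z) \<le> 12/100"
proof -
  define w where "w = z / 2"
  define S where "S = sinh w / w"
  define r where "r = norm w"
  have z: "z = 2 * w" and w0: "w \<noteq> 0" and r0: "0 < r" and r1: "r \<le> 3/4"
    using assms by (auto simp: w_def r_def norm_divide)
  have S1: "norm (S - 1) \<le> 182/1000 * r^2" and cS: "norm (cosh w - S) \<le> 371/1000 * r^2"
    using sinh_div_self_bounds[OF w0] r1 by (simp_all add: S_def r_def)
  have "r^2 \<le> (3/4)^2"
    using r0 r1 by (intro power_mono) auto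
  then have S1': "norm (S - 1) \<le> 182/1000 * (9/16)"
    using S1 by (simp add: power2_eq_square)
  have S_lower: "8976/10000 \<le> norm S"
    using norm_triangle_sub[of 1 S] S1' by (simp add: norm_minus_commute)
  then have "sinh w \<noteq> 0"
    by (auto simp: S_def)
  note double = laurent_tail_double[OF w0 this, folded S_def]
  have "norm (laurent_tail z) = norm (cosh w - S) / (2 * r * norm S)"
    unfolding z double(1) by (simp add: norm_divide norm_mult r_def)
  also have "\<dots> \<le> (371/1000 * r^2) / (2 * r * (8976/10000))"
    using cS S_lower r0 by (intro frac_le) auto
  also have "\<dots> \<le> 11/100 * norm z"
    using r0 by (simp add: z r_def[symmetric] power2_eq_square field_simps)
  finally show "norm (laurent_tail z) \<le> 11/100 * norm z" .
  have S_plus: "norm (S + 1) \<le> 2 + 182/1000 * (9/16)"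
    using norm_triangle_ineq[of "S - 1" 2] S1' by (simp add: add.commute)
  have "norm (laurent_tail' z) = norm (S - 1) * norm (S + 1) / (4 * r^2 * norm S ^ 2)"
    unfolding z double(2) by (simp add: norm_divide norm_mult norm_power r_def)
  also have "\<dots> \<le> (182/1000 * r^2) * (2 + 182/1000 * (9/16)) / (4 * r^2 * (8976/10000)^2)"
    using S1 S_plus S_lower r0 by (intro frac_le mult_mono mult_left_mono power_mono) auto
  also have "\<dots> \<le> 12/100"
    using r0 by (simp add: field_simps)
  finally show "norm (laurent_tail' z) \<le> 12/100" .
qed

lemma laurent_tail_lipschitz:
  assumes "0 < Re z" "norm z \<le> 3/2" and "0 < Re z'" "norm z' \<le> 3/2"
  shows "norm (laurent_tail z - laurent_tail z') \<le> 12/100 * norm (z - z')"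
proof (rule field_differentiable_bound)
  let ?D = "{z. 0 < Re z} \<inter> cball 0 (3/2)"
  show "convex ?D"
    by (intro convex_Int convex_halfspace_Re_gt convex_cball)
  show "(laurent_tail has_field_derivative laurent_tail' u) (at u within ?D)" if "u \<in> ?D" for u
    using that has_field_derivative_laurent_tail[of u] by (auto intro: has_field_derivative_at_within)
  show "norm (laurent_tail' u) \<le> 12/100" if "u \<in> ?D" for u
    using that laurent_tail_bounds(2)[of u] by (cases "u = 0") auto
qed (use assms in auto)

definition log_step :: "nat \<Rightarrow> real" where
  "log_step n = ln (1 + 1 / real n)"

lemma log_step_pos: "1 \<le> n \<Longrightarrow> 0 < log_step n"
  unfolding log_step_def by (intro ln_gt_zero) auto

lemma log_step_le: "1 \<le> n \<Longrightarrow> log_step n \<le> 1 / real n"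
  unfolding log_step_def by (rule ln_add_one_self_le_self) simp

lemma log_step_antimono:
  assumes "1 \<le> m" "m \<le> n"
  shows "log_step n \<le> log_step m"
proof -
  have "1 / real n \<le> 1 / real m"
    using assms by (intro divide_left_mono) auto
  then show ?thesis
    unfolding log_step_def by (simp add: add_pos_nonneg)
qed

lemma ln_Suc_eq_ln_add_log_step: "1 \<le> n \<Longrightarrow> ln (real (Suc n)) = ln (real n) + log_step n"
  unfolding log_step_def by (simp add: field_simps ln_div)

lemma inverse_log_step_bounds:
  assumes "1 \<le> n"
  shows "real n + 1/2 - 1 / (2 * (2 * real n + 1)) \<le> 1 / log_step n"
    and "1 / log_step n \<le> real n + 1/2"
proof -
  have pos: "0 < log_step n" and n: "0 < real n"
    using assms by (auto intro: log_step_pos)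
  have "log_step n \<le> (1 / real n) * (2 + 1 / real n) / (2 * (1 + 1 / real n))"
    unfolding log_step_def by (rule ln_one_plus_le) simp
  also have "\<dots> = inverse (2 * real n * (real n + 1) / (2 * real n + 1))"
    using n by (simp add: divide_simps)
  also have "2 * real n * (real n + 1) / (2 * real n + 1) = real n + 1/2 - 1 / (2 * (2 * real n + 1))"
    using n by (simp add: field_simps)
  finally have "inverse (inverse (real n + 1/2 - 1 / (2 * (2 * real n + 1)))) \<le> inverse (log_step n)"
    by (rule le_imp_inverse_le) (use pos in simp)
  then show "real n + 1/2 - 1 / (2 * (2 * real n + 1)) \<le> 1 / log_step n"
    by (simp add: inverse_eq_divide)
  have "inverse (real n + 1/2) = 2 * (1 / real n) / (2 + 1 / real n)"
    using n by (simp add: divide_simps)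
  also have "\<dots> \<le> log_step n"
    unfolding log_step_def by (rule ln_one_plus_ge) simp
  finally have "inverse (log_step n) \<le> inverse (inverse (real n + 1/2))"
    by (rule le_imp_inverse_le) (use n in simp)
  then show "1 / log_step n \<le> real n + 1/2"
    by (simp add: inverse_eq_divide)
qed

lemma inverse_log_step_near:
  assumes "1 \<le> n"
  shows "\<bar>1 / log_step n - real n\<bar> \<le> 1/2"
proof -
  have "1 / (2 * (2 * real n + 1)) \<le> 1"
    by simp
  then show ?thesis
    using inverse_log_step_bounds[OF assms] by linarith
qed

lemma inverse_log_step_diff:
  assumes "1 \<le> n"
  shows "\<bar>1 / log_step (Suc n) - 1 / log_step n - 1\<bar> \<le> 1 / (2 * real (Suc n))"
proof -
  note bounds = inverse_log_step_bounds[of n] inverse_log_step_bounds[of "Suc n"]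
  have "1 / (2 * (2 * real n + 1)) \<le> 1 / (2 * real (Suc n))"
       "1 / (2 * (2 * real (Suc n) + 1)) \<le> 1 / (2 * real (Suc n))"
    using assms by (simp_all add: frac_le)
  then show ?thesis
    using bounds assms by auto
qed

lemma log_step_tendsto_0: "log_step \<longlonglongrightarrow> 0"
proof (rule Lim_null_comparison)
  show "\<forall>\<^sub>F n in sequentially. norm (log_step n) \<le> 1 / real n"
    using eventually_ge_at_top[of "1::nat"]
    by eventually_elim (use log_step_le log_step_pos in \<open>auto simp: less_imp_le\<close>)
qed (rule lim_const_over_n)

section \<open>Summation by parts\<close>

(* n^-s via the real logarithm; it agrees with 1 / n powr s only for n \<ge> 1 (at n = 0 it is 1). *)
definition nat_powr_neg :: "complex \<Rightarrow> nat \<Rightarrow> complex" where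
  "nat_powr_neg s n = exp (- (s * of_real (ln (real n))))"

lemma one_div_of_nat_powr: "1 \<le> n \<Longrightarrow> 1 / (of_nat n powr s) = nat_powr_neg s n"
  by (simp add: nat_powr_neg_def powr_def exp_minus divide_inverse mult.commute)

lemma norm_nat_powr_neg: "1 \<le> n \<Longrightarrow> norm (nat_powr_neg s n) = real n powr (- Re s)"
  by (simp add: nat_powr_neg_def norm_exp_eq_Re powr_def)

lemma nat_powr_neg_Suc:
  "1 \<le> n \<Longrightarrow> nat_powr_neg s (Suc n) = nat_powr_neg s n * exp (- (s * of_real (log_step n)))"
  unfolding nat_powr_neg_def ln_Suc_eq_ln_add_log_step
  by (simp add: distrib_left algebra_simps flip: exp_add)

lemma of_nat_powr_one_minus:
  assumes "1 \<le> N"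
  shows "of_nat N powr (1 - s) = of_nat N * nat_powr_neg s N"
proof -
  have "(of_nat N :: complex) powr (1 - s) = exp (of_real (ln (real N))) * nat_powr_neg s N"
    using assms by (simp add: powr_def nat_powr_neg_def algebra_simps flip: exp_add)
  also have "exp (of_real (ln (real N)) :: complex) = of_nat N"
    using assms by (simp add: exp_of_real flip: of_real_exp)
  finally show ?thesis .
qed

lemma Re_mult_log_step_pos: "0 < Re s \<Longrightarrow> 1 \<le> n \<Longrightarrow> 0 < Re (s * of_real (log_step n))"
  using log_step_pos[of n] by simp

lemma norm_mult_log_step_le:
  fixes s :: complex
  assumes "1 \<le> n"
  shows "norm (s * of_real (log_step n)) \<le> norm s / real n"
proof -
  have "norm (s * of_real (log_step n)) = norm s * log_step n"
    using log_step_pos[OF assms] by (simp add: norm_mult)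
  also have "\<dots> \<le> norm s * (1 / real n)"
    using log_step_le[OF assms] by (rule mult_left_mono) simp
  finally show ?thesis by simp
qed

lemma norm_mult_log_step_le_three_halves:
  fixes s :: complex
  assumes "1 \<le> n" "norm s \<le> 3/2 * real n"
  shows "norm (s * of_real (log_step n)) \<le> 3/2"
proof -
  have "norm (s * of_real (log_step n)) \<le> norm s / real n"
    by (rule norm_mult_log_step_le[OF assms(1)])
  also have "\<dots> \<le> 3/2"
    using assms by (simp add: divide_simps)
  finally show ?thesis .
qed

definition abel_weight :: "complex \<Rightarrow> nat \<Rightarrow> complex" where
  "abel_weight s n = 1 / (1 - exp (- (s * of_real (log_step n))))"

lemma nat_powr_neg_eq_abel_weight:
  assumes "0 < Re s" "1 \<le> n"
  shows "nat_powr_neg s n = (nat_powr_neg s n - nat_powr_neg s (Suc n)) * abel_weight s n"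
proof -
  have "1 - exp (- (s * of_real (log_step n))) \<noteq> 0"
    using Re_mult_log_step_pos[OF assms] by (auto simp: exp_eq_1)
  then show ?thesis
    by (simp add: nat_powr_neg_Suc[OF assms(2)] abel_weight_def field_simps)
qed

lemma abel_weight_laurent:
  "abel_weight s n = of_real (1 / log_step n) / s + 1/2 + laurent_tail (s * of_real (log_step n))"
  by (simp add: abel_weight_def laurent_tail_def)

lemma norm_abel_weight_diff_le:
  assumes "0 < Re s" "1 \<le> n" "norm s \<le> 3/2 * real n"
  shows "norm (abel_weight s (Suc n) - abel_weight s n - 1 / s)
    \<le> 1 / (2 * real (Suc n) * norm s) + 12/100 * norm s * (log_step n - log_step (Suc n))"
proof -
  define L where "L k = s * of_real (log_step k)" for k
  have L_dom: "0 < Re (L k) \<and> norm (L k) \<le> 3/2" if "n \<le> k" for k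
  proof
    show "0 < Re (L k)"
      unfolding L_def using assms that by (intro Re_mult_log_step_pos) auto
    show "norm (L k) \<le> 3/2"
      unfolding L_def using assms that by (intro norm_mult_log_step_le_three_halves) auto
  qed
  have mono: "log_step (Suc n) \<le> log_step n"
    using assms by (intro log_step_antimono) auto
  have "norm (laurent_tail (L (Suc n)) - laurent_tail (L n)) \<le> 12/100 * norm (L (Suc n) - L n)"
    using L_dom[of n] L_dom[of "Suc n"] by (intro laurent_tail_lipschitz) auto
  also have "norm (L (Suc n) - L n) = norm s * (log_step n - log_step (Suc n))"
    using mono by (simp add: L_def norm_mult flip: right_diff_distrib of_real_diff)
  finally have tail: "norm (laurent_tail (L (Suc n)) - laurent_tail (L n))
      \<le> 12/100 * norm s * (log_step n - log_step (Suc n))"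
    by simp
  have main: "norm (of_real (1 / log_step (Suc n) - 1 / log_step n - 1) / s)
      \<le> 1 / (2 * real (Suc n) * norm s)"
  proof -
    have "norm (of_real (1 / log_step (Suc n) - 1 / log_step n - 1) / s)
        = \<bar>1 / log_step (Suc n) - 1 / log_step n - 1\<bar> / norm s"
      by (simp add: norm_divide del: of_real_diff)
    also have "\<dots> \<le> (1 / (2 * real (Suc n))) / norm s"
      using inverse_log_step_diff[OF assms(2)] by (rule divide_right_mono) simp
    finally show ?thesis
      by simp
  qed
  have "abel_weight s (Suc n) - abel_weight s n - 1 / s
      = of_real (1 / log_step (Suc n) - 1 / log_step n - 1) / s
        + (laurent_tail (L (Suc n)) - laurent_tail (L n))"
    by (simp add: abel_weight_laurent L_def diff_divide_distrib)
  then show ?thesis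
    using norm_triangle_ineq[of "of_real (1 / log_step (Suc n) - 1 / log_step n - 1) / s"
        "laurent_tail (L (Suc n)) - laurent_tail (L n)"] main tail
    by simp
qed

lemma powr_neg_over_double_le:
  fixes \<sigma> :: real
  assumes "1/2 \<le> \<sigma>" "1 \<le> M" "M \<le> m"
  shows "real (Suc m) powr (- \<sigma>) / (2 * real (Suc m))
    \<le> real M powr (- \<sigma>) * real M powr (1/2) * (real m powr (-1/2) - real (Suc m) powr (-1/2))"
proof -
  define n where "n = real (Suc m)"
  have n: "2 \<le> n" "real M \<le> n" "n - 1 = real m"
    using assms by (auto simp: n_def)
  have "n powr (- \<sigma>) / (2 * n) = n powr (- (\<sigma> - 1/2)) * (1/2 * (n powr (-1/2) / n))"
    by (simp add: flip: powr_add)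
  also have "\<dots> \<le> real M powr (- (\<sigma> - 1/2)) * ((n - 1) powr (-1/2) - n powr (-1/2))"
  proof (rule mult_mono)
    show "n powr (- (\<sigma> - 1/2)) \<le> real M powr (- (\<sigma> - 1/2))"
      using assms n by (intro powr_mono2') auto
    show "1/2 * (n powr (-1/2) / n) \<le> (n - 1) powr (-1/2) - n powr (-1/2)"
      using powr_neg_diff_ge[of "1/2" n] n by simp
  qed (use n in auto)
  also have "\<dots> = real M powr (- \<sigma>) * real M powr (1/2) * (real m powr (-1/2) - n powr (-1/2))"
    by (simp add: n(3) flip: powr_add)
  finally show ?thesis
    unfolding n_def .
qed

(* Summation by parts produces the terms a (n+1) (c (n+1) - c n); this is what remains after
   removing their main part a (n+1) / s, which is absorbed into the factor s / (s - 1). *)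
definition abel_defect :: "complex \<Rightarrow> nat \<Rightarrow> complex" where
  "abel_defect s n = nat_powr_neg s (Suc n) * (abel_weight s (Suc n) - abel_weight s n - 1 / s)"

definition abel_majorant :: "complex \<Rightarrow> nat \<Rightarrow> nat \<Rightarrow> real" where
  "abel_majorant s M n = real M powr (- Re s)
     * (real M powr (1/2) / norm s * real n powr (-1/2) + 12/100 * norm s * log_step n)"

lemma norm_abel_defect_le:
  assumes "1/2 \<le> Re s" "1 \<le> M" "norm s \<le> 3/2 * real M" "M \<le> n"
  shows "norm (abel_defect s n) \<le> abel_majorant s M n - abel_majorant s M (Suc n)"
proof -
  define P where "P = real M powr (- Re s)"
  have s: "0 < norm s"
    using assms(1) by auto
  have n: "1 \<le> n" "norm s \<le> 3/2 * real n"
    using assms by auto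
  have mono: "log_step (Suc n) \<le> log_step n"
    using n by (intro log_step_antimono) auto
  have weight: "real (Suc n) powr (- Re s) \<le> P"
    unfolding P_def using assms by (intro powr_mono2') auto
  have step: "real (Suc n) powr (- Re s) / (2 * real (Suc n))
      \<le> P * real M powr (1/2) * (real n powr (-1/2) - real (Suc n) powr (-1/2))"
    unfolding P_def by (rule powr_neg_over_double_le[OF assms(1,2,4)])
  have "norm (abel_defect s n) \<le> real (Suc n) powr (- Re s)
      * (1 / (2 * real (Suc n) * norm s) + 12/100 * norm s * (log_step n - log_step (Suc n)))"
    unfolding abel_defect_def norm_mult norm_nat_powr_neg[of "Suc n" s, OF le_SucI[OF n(1)]]
    using norm_abel_weight_diff_le[OF _ n] assms(1) by (intro mult_left_mono) auto
  also have "\<dots> = (real (Suc n) powr (- Re s) / (2 * real (Suc n))) / norm s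
      + real (Suc n) powr (- Re s) * (12/100 * norm s * (log_step n - log_step (Suc n)))"
    by (simp add: algebra_simps)
  also have "\<dots> \<le> (P * real M powr (1/2) * (real n powr (-1/2) - real (Suc n) powr (-1/2))) / norm s
      + P * (12/100 * norm s * (log_step n - log_step (Suc n)))"
    by (intro add_mono divide_right_mono mult_right_mono step weight) (use mono s in auto)
  also have "\<dots> = abel_majorant s M n - abel_majorant s M (Suc n)"
    by (simp add: abel_majorant_def P_def algebra_simps diff_divide_distrib)
  finally show ?thesis .
qed

definition zeta_partial :: "complex \<Rightarrow> nat \<Rightarrow> complex" where
  "zeta_partial s N = (\<Sum>n=1..N. 1 / (of_nat n powr s)) - of_nat N powr (1 - s) / (1 - s)"

lemma riemann_zeta_eqI:
  assumes "(\<lambda>j. zeta_partial s (M + j)) \<longlonglongrightarrow> z"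
  shows "riemann_zeta s = z"
proof -
  have "zeta_partial s \<longlonglongrightarrow> z"
    by (rule LIMSEQ_offset[of _ M]) (use assms in \<open>simp only: add.commute\<close>)
  then have "lim (zeta_partial s) = z"
    by (rule limI)
  moreover have "riemann_zeta s = lim (zeta_partial s)"
    unfolding riemann_zeta_def zeta_partial_def ..
  ultimately show ?thesis
    by simp
qed

lemma zeta_partial_split:
  assumes "1 \<le> M"
  shows "zeta_partial s (M + j) = (\<Sum>n\<in>{1..<M}. nat_powr_neg s n) + (\<Sum>k\<le>j. nat_powr_neg s (M + k))
    + of_nat (M + j) * nat_powr_neg s (M + j) / (s - 1)"
proof -
  have "(\<Sum>n=1..M + j. nat_powr_neg s n)
      = (\<Sum>n\<in>{1..<M}. nat_powr_neg s n) + (\<Sum>k\<le>j. nat_powr_neg s (M + k))"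
  proof (induction j)
    case 0
    have "{1..M} = insert M {1..<M}"
      using assms by auto
    then show ?case by simp
  next
    case (Suc j)
    then show ?case
      using assms by (simp add: add.assoc)
  qed
  moreover have "(\<Sum>n=1..M + j. 1 / (of_nat n powr s)) = (\<Sum>n=1..M + j. nat_powr_neg s n)"
    by (intro sum.cong) (auto simp: one_div_of_nat_powr)
  moreover have "of_nat (M + j) powr (1 - s) / (1 - s) = - (of_nat (M + j) * nat_powr_neg s (M + j) / (s - 1))"
    unfolding of_nat_powr_one_minus[OF trans_le_add1[OF assms]] by (simp flip: divide_minus_right)
  ultimately show ?thesis
    unfolding zeta_partial_def by simp
qed

lemma abel_summation:
  assumes "0 < Re s" "1 \<le> M"
  shows "(s - 1) * (\<Sum>k\<le>j. nat_powr_neg s (M + k))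
    = s * (nat_powr_neg s M * (abel_weight s M - 1 / s) + (\<Sum>k<j. abel_defect s (M + k)))
      - s * nat_powr_neg s (Suc (M + j)) * abel_weight s (M + j)"
proof (induction j)
  case 0
  have "s * nat_powr_neg s M = s * ((nat_powr_neg s M - nat_powr_neg s (Suc M)) * abel_weight s M)"
    using nat_powr_neg_eq_abel_weight[OF assms] by simp
  moreover have "s \<noteq> 0"
    using assms(1) by auto
  ultimately show ?case
    by (simp add: algebra_simps)
next
  case (Suc j)
  define a where "a = nat_powr_neg s"
  define c where "c = abel_weight s"
  define A where "A = a M * (c M - 1 / s)"
  define X where "X = (\<Sum>k\<le>j. a (M + k))"
  define D where "D = (\<Sum>k<j. abel_defect s (M + k))"
  define N where "N = M + j"
  have IH: "(s - 1) * X = s * (A + D) - s * a (Suc N) * c N"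
    using Suc.IH by (simp add: a_def c_def A_def X_def D_def N_def)
  have weight: "a (Suc N) = (a (Suc N) - a (Suc (Suc N))) * c (Suc N)"
    unfolding a_def c_def N_def using assms by (intro nat_powr_neg_eq_abel_weight) auto
  have "s \<noteq> 0"
    using assms(1) by auto
  then have "s * (A + (D + a (Suc N) * (c (Suc N) - c N - 1 / s))) - s * a (Suc (Suc N)) * c (Suc N)
      = (s * (A + D) - s * a (Suc N) * c N) + s * ((a (Suc N) - a (Suc (Suc N))) * c (Suc N)) - a (Suc N)"
    by (simp add: algebra_simps)
  also have "\<dots> = (s - 1) * (X + a (Suc N))"
    unfolding IH[symmetric] weight[symmetric] by (simp add: algebra_simps)
  finally show ?case
    by (simp add: a_def c_def A_def X_def D_def N_def abel_defect_def)
qed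

definition abel_boundary :: "complex \<Rightarrow> nat \<Rightarrow> complex" where
  "abel_boundary s N = s * nat_powr_neg s (Suc N) * abel_weight s N - of_nat N * nat_powr_neg s N"

lemma zeta_partial_abel:
  assumes "0 < Re s" "1 \<le> M" "s \<noteq> 1"
  shows "zeta_partial s (M + j) = (\<Sum>n\<in>{1..<M}. nat_powr_neg s n)
    + (s * (nat_powr_neg s M * (abel_weight s M - 1 / s) + (\<Sum>k<j. abel_defect s (M + k)))
       - abel_boundary s (M + j)) / (s - 1)"
proof -
  have "(\<Sum>k\<le>j. nat_powr_neg s (M + k))
      = (s * (nat_powr_neg s M * (abel_weight s M - 1 / s) + (\<Sum>k<j. abel_defect s (M + k)))
         - s * nat_powr_neg s (Suc (M + j)) * abel_weight s (M + j)) / (s - 1)"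
    using abel_summation[OF assms(1,2), of j] assms(3) by (simp add: eq_divide_eq ac_simps)
  then show ?thesis
    unfolding zeta_partial_split[OF assms(2)] abel_boundary_def
    by (simp add: add_divide_distrib diff_divide_distrib)
qed

lemma norm_abel_boundary_le:
  fixes s :: complex
  assumes "0 < Re s" "1 \<le> N" "norm s \<le> 3/2 * real N"
  shows "norm (abel_boundary s N) \<le> real N powr (- Re s) * (1 + norm s)"
proof -
  define L where "L = s * of_real (log_step N)"
  have s: "s \<noteq> 0" and L: "L \<noteq> 0" "norm L \<le> 3/2"
    using assms log_step_pos[OF assms(2)] norm_mult_log_step_le_three_halves[OF assms(2,3)]
    by (auto simp: L_def)
  have "1 - exp (- L) \<noteq> 0"
    using Re_mult_log_step_pos[OF assms(1,2)] by (auto simp: L_def exp_eq_1)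
  then have "s * nat_powr_neg s (Suc N) * abel_weight s N = nat_powr_neg s N * (s * (abel_weight s N - 1))"
    by (simp add: nat_powr_neg_Suc[OF assms(2)] abel_weight_def L_def[symmetric] field_simps)
  also have "s * (abel_weight s N - 1) = of_real (1 / log_step N) - s / 2 + s * laurent_tail L"
    using s by (simp add: abel_weight_laurent L_def algebra_simps)
  finally have eq: "abel_boundary s N
      = nat_powr_neg s N * (of_real (1 / log_step N - real N) - s / 2 + s * laurent_tail L)"
    by (simp add: abel_boundary_def algebra_simps)
  have "norm (of_real (1 / log_step N - real N) - s / 2 + s * laurent_tail L)
      \<le> \<bar>1 / log_step N - real N\<bar> + norm s / 2 + norm s * norm (laurent_tail L)"
    using norm_triangle_ineq[of "of_real (1 / log_step N - real N) - s / 2" "s * laurent_tail L"]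
      norm_triangle_ineq4[of "of_real (1 / log_step N - real N) :: complex" "s / 2"]
    by (simp add: norm_mult norm_divide del: of_real_diff of_real_divide)
  also have "\<dots> \<le> 1/2 + norm s / 2 + norm s * (11/100 * (3/2))"
    using inverse_log_step_near[OF assms(2)] laurent_tail_bounds(1)[OF L] L(2)
    by (intro add_mono mult_left_mono) auto
  also have "\<dots> \<le> 1 + norm s"
    using norm_ge_zero[of s] by linarith
  finally show ?thesis
    unfolding eq norm_mult norm_nat_powr_neg[OF assms(2)] by (rule mult_left_mono) simp
qed

lemma abel_boundary_tendsto_0:
  assumes "0 < Re s" "1 \<le> M" "norm s \<le> 3/2 * real M"
  shows "(\<lambda>j. abel_boundary s (M + j)) \<longlonglongrightarrow> 0"
proof (rule Lim_null_comparison)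
  show "\<forall>\<^sub>F j in sequentially. norm (abel_boundary s (M + j)) \<le> real (M + j) powr (- Re s) * (1 + norm s)"
    using assms by (intro always_eventually allI norm_abel_boundary_le) auto
  show "(\<lambda>j. real (M + j) powr (- Re s) * (1 + norm s)) \<longlonglongrightarrow> 0"
    by (intro tendsto_mult_left_zero powr_neg_shift_tendsto_0 assms(1))
qed

lemma abel_defect_series:
  assumes "1/2 \<le> Re s" "1 \<le> M" "norm s \<le> 3/2 * real M"
  shows "summable (\<lambda>k. abel_defect s (M + k))"
    and "norm (\<Sum>k. abel_defect s (M + k))
      \<le> real M powr (- Re s) * (1 / norm s + 12/100 * norm s * log_step M)"
proof -
  define G where "G k = abel_majorant s M (M + k)" for k
  have "G \<longlonglongrightarrow> real M powr (- Re s) * (real M powr (1/2) / norm s * 0 + 12/100 * norm s * 0)"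
    unfolding G_def abel_majorant_def
    using powr_neg_shift_tendsto_0[of "1/2" M] LIMSEQ_ignore_initial_segment[OF log_step_tendsto_0, of M]
    by (intro tendsto_intros) (simp_all add: add.commute)
  then have "G \<longlonglongrightarrow> 0"
    by simp
  moreover have "norm (abel_defect s (M + k)) \<le> G k - G (Suc k)" for k
    unfolding G_def using norm_abel_defect_le[OF assms, of "M + k"] by simp
  ultimately show "summable (\<lambda>k. abel_defect s (M + k))"
    and "norm (\<Sum>k. abel_defect s (M + k)) \<le> real M powr (- Re s) * (1 / norm s + 12/100 * norm s * log_step M)"
    using norm_suminf_le_telescope[of "\<lambda>k. abel_defect s (M + k)" G] assms(2)
    by (auto simp: G_def abel_majorant_def simp flip: powr_add)
qed

lemma zeta_tail_expansion:
  assumes "1/2 \<le> Re s" "1 \<le> M" "norm s \<le> 3/2 * real M" "s \<noteq> 1"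
  shows "riemann_zeta s = (\<Sum>n\<in>{1..<M}. nat_powr_neg s n)
      + s / (s - 1) * (nat_powr_neg s M * (abel_weight s M - 1 / s) + (\<Sum>k. abel_defect s (M + k)))"
proof -
  have s: "0 < Re s" "s - 1 \<noteq> 0"
    using assms by auto
  have "(\<lambda>j. zeta_partial s (M + j)) \<longlonglongrightarrow> (\<Sum>n\<in>{1..<M}. nat_powr_neg s n)
      + (s * (nat_powr_neg s M * (abel_weight s M - 1 / s) + (\<Sum>k. abel_defect s (M + k))) - 0) / (s - 1)"
    unfolding zeta_partial_abel[OF s(1) assms(2,4)]
    using summable_LIMSEQ[OF abel_defect_series(1)[OF assms(1-3)]] abel_boundary_tendsto_0[OF s(1) assms(2,3)]
    by (intro tendsto_intros s(2))
  then show ?thesis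
    by (simp add: riemann_zeta_eqI)
qed

lemma norm_abel_weight_minus_inverse_le:
  assumes "0 < Re s" "1 \<le> M" "norm s \<le> 3/2 * real M"
  shows "norm (abel_weight s M - 1 / s)
    \<le> (real M - 1/2) / norm s + 1/2 + 11/100 * (norm s * log_step M)"
proof -
  define L where "L = s * of_real (log_step M)"
  have "1 / real M \<le> 1"
    using assms(2) by simp
  then have ell: "0 < log_step M" "log_step M \<le> 1"
    using log_step_pos[OF assms(2)] log_step_le[OF assms(2)] by auto
  have L: "L \<noteq> 0" "norm L \<le> 3/2" "norm L = norm s * log_step M"
    using assms(1) ell norm_mult_log_step_le_three_halves[OF assms(2,3)] by (auto simp: L_def norm_mult)
  have "1 \<le> 1 / log_step M"
    using ell by (simp add: divide_simps)
  then have "\<bar>1 / log_step M - 1\<bar> \<le> real M - 1/2"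
    using inverse_log_step_bounds(2)[OF assms(2)] by (simp add: abs_of_nonneg)
  then have "norm (of_real (1 / log_step M - 1) / s) \<le> (real M - 1/2) / norm s"
    by (simp add: norm_divide divide_right_mono del: of_real_diff of_real_divide)
  moreover have "norm (laurent_tail L) \<le> 11/100 * (norm s * log_step M)"
    using laurent_tail_bounds(1)[OF L(1,2)] L(3) by simp
  moreover have "abel_weight s M - 1 / s = of_real (1 / log_step M - 1) / s + 1/2 + laurent_tail L"
    by (simp add: abel_weight_laurent L_def diff_divide_distrib)
  ultimately show ?thesis
    using norm_triangle_ineq[of "of_real (1 / log_step M - 1) / s + 1/2" "laurent_tail L"]
      norm_triangle_ineq[of "of_real (1 / log_step M - 1) / s" "1/2 :: complex"]
    by simp
qed

lemma norm_zeta_minus_partial_le: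
  assumes "1/2 \<le> Re s" "1 \<le> M" "norm s \<le> 3/2 * real M" "s \<noteq> 1"
  shows "norm (riemann_zeta s - (\<Sum>n\<in>{1..<M}. nat_powr_neg s n))
    \<le> norm (s / (s - 1)) * (real M powr (- Re s)
        * ((real M + 1/2) / norm s + 1/2 + 23/100 * (norm s * log_step M)))"
proof -
  define T where "T = (\<Sum>k. abel_defect s (M + k))"
  have zeta: "riemann_zeta s = (\<Sum>n\<in>{1..<M}. nat_powr_neg s n)
      + s / (s - 1) * (nat_powr_neg s M * (abel_weight s M - 1 / s) + T)"
    unfolding T_def by (rule zeta_tail_expansion[OF assms])
  have T: "norm T \<le> real M powr (- Re s) * (1 / norm s + 12/100 * (norm s * log_step M))"
    unfolding T_def using abel_defect_series(2)[OF assms(1-3)] by (simp add: mult.assoc)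
  have "norm (nat_powr_neg s M * (abel_weight s M - 1 / s))
      \<le> real M powr (- Re s) * ((real M - 1/2) / norm s + 1/2 + 11/100 * (norm s * log_step M))"
    unfolding norm_mult norm_nat_powr_neg[OF assms(2)]
    using assms by (intro mult_left_mono norm_abel_weight_minus_inverse_le) auto
  then have "norm (nat_powr_neg s M * (abel_weight s M - 1 / s) + T)
      \<le> real M powr (- Re s) * ((real M + 1/2) / norm s + 1/2 + 23/100 * (norm s * log_step M))"
    using norm_triangle_ineq[of "nat_powr_neg s M * (abel_weight s M - 1 / s)" T] T
    by (simp add: algebra_simps add_divide_distrib diff_divide_distrib)
  then show ?thesis
    unfolding zeta norm_mult add_diff_cancel_left' by (rule mult_left_mono) simp
qed

lemma nat_powr_neg_tail_series:
  assumes "1 < Re s" "1 \<le> M"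
  shows "summable (\<lambda>k. nat_powr_neg s (Suc (M + k)))"
    and "norm (\<Sum>k. nat_powr_neg s (Suc (M + k))) \<le> real M powr (1 - Re s) / (Re s - 1)"
proof -
  define q where "q = Re s - 1"
  have q: "0 < q"
    using assms(1) by (simp add: q_def)
  define G where "G k = real (M + k) powr (- q) / q" for k
  have "norm (nat_powr_neg s (Suc (M + k))) \<le> G k - G (Suc k)" for k
  proof -
    define x where "x = real (Suc (M + k))"
    have x: "1 < x" "x - 1 = real (M + k)"
      using assms(2) by (auto simp: x_def)
    have "norm (nat_powr_neg s (Suc (M + k))) = x powr (- q - 1)"
      by (simp add: norm_nat_powr_neg x_def q_def)
    also have "\<dots> = x powr (- q) / x"
      using x by (simp add: powr_diff)
    also have "\<dots> \<le> ((x - 1) powr (- q) - x powr (- q)) / q"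
      using powr_neg_diff_ge[of q x] q x by (simp add: field_simps)
    also have "\<dots> = G k - G (Suc k)"
      by (simp add: G_def x diff_divide_distrib x_def)
    finally show ?thesis .
  qed
  moreover have "G \<longlonglongrightarrow> 0"
    unfolding G_def by (intro tendsto_divide_zero powr_neg_shift_tendsto_0 q)
  ultimately show "summable (\<lambda>k. nat_powr_neg s (Suc (M + k)))"
    and "norm (\<Sum>k. nat_powr_neg s (Suc (M + k))) \<le> real M powr (1 - Re s) / (Re s - 1)"
    using norm_suminf_le_telescope[of "\<lambda>k. nat_powr_neg s (Suc (M + k))" G] by (auto simp: G_def q_def)
qed

lemma norm_zeta_minus_partial_le_trivial:
  assumes "1 < Re s" "1 \<le> M"
  shows "norm (riemann_zeta s - (\<Sum>n\<in>{1..<M}. nat_powr_neg s n))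
    \<le> real M powr (- Re s) + real M powr (1 - Re s) / (Re s - 1)"
proof -
  have "norm (of_nat (M + j) * nat_powr_neg s (M + j)) = real (M + j) * real (M + j) powr (- Re s)" for j
    using assms(2) by (simp only: norm_mult norm_of_nat norm_nat_powr_neg trans_le_add1)
  also have "real (M + j) * real (M + j) powr (- Re s) = real (M + j) powr (- (Re s - 1))" for j
    by (simp add: powr_mult_base)
  finally have norm_eq: "(\<lambda>j. norm (of_nat (M + j) * nat_powr_neg s (M + j)))
      = (\<lambda>j. real (M + j) powr (- (Re s - 1)))"
    by (rule ext)
  have "(\<lambda>j. of_nat (M + j) * nat_powr_neg s (M + j)) \<longlonglongrightarrow> 0"
    by (rule tendsto_norm_zero_cancel) (use powr_neg_shift_tendsto_0[of "Re s - 1" M] assms(1) norm_eq in simp)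
  then have "(\<lambda>j. zeta_partial s (M + j)) \<longlonglongrightarrow> (\<Sum>n\<in>{1..<M}. nat_powr_neg s n)
      + (nat_powr_neg s M + (\<Sum>k. nat_powr_neg s (Suc (M + k)))) + 0 / (s - 1)"
    unfolding zeta_partial_split[OF assms(2)] sum.atMost_shift
    using summable_LIMSEQ[OF nat_powr_neg_tail_series(1)[OF assms]] assms(1)
    by (intro tendsto_intros) auto
  then have "riemann_zeta s - (\<Sum>n\<in>{1..<M}. nat_powr_neg s n)
      = nat_powr_neg s M + (\<Sum>k. nat_powr_neg s (Suc (M + k)))"
    by (simp add: riemann_zeta_eqI)
  also have "norm \<dots> \<le> real M powr (- Re s) + real M powr (1 - Re s) / (Re s - 1)"
    using norm_triangle_ineq[of "nat_powr_neg s M" "\<Sum>k. nat_powr_neg s (Suc (M + k))"]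
      nat_powr_neg_tail_series(2)[OF assms] assms(2)
    by (simp add: norm_nat_powr_neg)
  finally show ?thesis .
qed

section \<open>Numerical bounds for t \<ge> 14.1347\<close>

lemma norm_div_diff_one_le:
  fixes s :: complex
  assumes "14.1347 \<le> Im s"
  shows "norm (s / (s - 1)) \<le> 104/100"
proof -
  have "14.1347^2 \<le> Im s ^ 2"
    using assms by (intro power_mono) auto
  moreover have "0 \<le> (Re s - 27/2) ^ 2"
    by simp
  (* the two sides below differ by 0.08 (Re s - 27/2)^2 + 0.08 (Im s)^2 - 13.5 *)
  ultimately have "Re s ^ 2 + Im s ^ 2 \<le> 108/100 * ((Re s - 1) ^ 2 + Im s ^ 2)"
    unfolding power2_eq_square by (simp add: algebra_simps)
  then have "norm s ^ 2 \<le> 108/100 * norm (s - 1) ^ 2"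
    by (simp add: cmod_power2)
  also have "\<dots> \<le> 10816/10000 * norm (s - 1) ^ 2"
    by (intro mult_right_mono) auto
  finally have "norm s ^ 2 \<le> 10816/10000 * norm (s - 1) ^ 2" .
  moreover have "0 < norm (s - 1)"
    using assms by auto
  ultimately have "(norm s / norm (s - 1)) ^ 2 \<le> (104/100)^2"
    by (simp add: power_divide divide_le_eq power2_eq_square)
  then show ?thesis
    unfolding norm_divide by (rule power2_le_imp_le) simp
qed

lemma norm_le_of_Re_Im_le:
  fixes s :: complex
  assumes "\<bar>Re s\<bar> \<le> x" "\<bar>Im s\<bar> \<le> x"
  shows "norm s \<le> 14143/10000 * x"
proof -
  have "\<bar>Re s\<bar> ^ 2 \<le> x ^ 2" "\<bar>Im s\<bar> ^ 2 \<le> x ^ 2"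
    using power_mono[OF assms(1), of 2] power_mono[OF assms(2), of 2] by simp_all
  then have "norm s ^ 2 \<le> 2 * x ^ 2"
    by (simp add: cmod_power2)
  also have "\<dots> \<le> (14143/10000 * x) ^ 2"
    by (simp add: power2_eq_square)
  finally show ?thesis
    by (rule power2_le_imp_le) (use assms in auto)
qed

lemma zeta_tail_bound_moderate_sigma:
  assumes "1/2 \<le> Re s" "Re s \<le> Im s" "14.1347 \<le> Im s" "Im s \<le> real M" "real M < Im s + 1"
  shows "norm (riemann_zeta s - (\<Sum>n\<in>{1..<M}. nat_powr_neg s n)) \<le> 201/100 * real M powr (- Re s)"
proof -
  have M: "1 \<le> M"
    using assms by simp
  have s: "norm s \<le> 14143/10000 * real M"
    using assms by (intro norm_le_of_Re_Im_le) auto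
  have "Im s \<le> norm s"
    using abs_Im_le_cmod[of s] by simp
  then have "(real M + 1/2) / norm s \<le> (Im s + 3/2) / Im s"
    using assms by (intro frac_le) auto
  also have "\<dots> = 1 + (3/2) / Im s"
    using assms by (simp add: field_simps)
  also have "\<dots> \<le> 1 + (3/2) / 14.1347"
    using assms by (intro add_left_mono divide_left_mono) auto
  also have "\<dots> \<le> 11062/10000"
    by simp
  finally have first: "(real M + 1/2) / norm s \<le> 11062/10000" .
  define K where "K = (real M + 1/2) / norm s + 1/2 + 23/100 * (norm s * log_step M)"
  have "norm s * log_step M \<le> norm s * (1 / real M)"
    using log_step_le[OF M] by (intro mult_left_mono) auto
  also have "\<dots> \<le> 14143/10000"
    using s M by (simp add: divide_simps)
  finally have "norm s * log_step M \<le> 14143/10000" .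
  then have K: "K \<le> 19315/10000"
    using first unfolding K_def by linarith
  have K0: "0 \<le> K"
    using log_step_pos[OF M] unfolding K_def by simp
  have "norm (riemann_zeta s - (\<Sum>n\<in>{1..<M}. nat_powr_neg s n))
      \<le> norm (s / (s - 1)) * (real M powr (- Re s) * K)"
    unfolding K_def using s assms by (intro norm_zeta_minus_partial_le M) auto
  also have "\<dots> \<le> 104/100 * (real M powr (- Re s) * (19315/10000))"
    using norm_div_diff_one_le[OF assms(3)] K K0 by (intro mult_mono mult_left_mono) auto
  finally show ?thesis
    using powr_ge_zero[of "real M" "- Re s"] by linarith
qed

lemma zeta_tail_bound_large_sigma:
  assumes "Im s < Re s" "14.1347 \<le> Im s" "1 \<le> M" "real M < Im s + 1"
  shows "norm (riemann_zeta s - (\<Sum>n\<in>{1..<M}. nat_powr_neg s n)) \<le> 21523/10000 * real M powr (- Re s)"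
proof -
  have "real M / (Re s - 1) \<le> (Im s + 1) / (Im s - 1)"
    using assms by (intro frac_le) auto
  also have "\<dots> = 1 + 2 / (Im s - 1)"
    using assms by (simp add: field_simps)
  also have "\<dots> \<le> 1 + 2 / (14.1347 - 1)"
    using assms by (intro add_left_mono divide_left_mono) auto
  also have "\<dots> \<le> 11523/10000"
    by simp
  finally have ratio: "real M / (Re s - 1) \<le> 11523/10000" .
  have "real M powr (1 - Re s) / (Re s - 1) = real M powr (- Re s) * (real M / (Re s - 1))"
    using assms by (simp add: powr_diff powr_minus_divide)
  also have "\<dots> \<le> real M powr (- Re s) * (11523/10000)"
    using ratio by (intro mult_left_mono) auto
  finally have "real M powr (1 - Re s) / (Re s - 1) \<le> real M powr (- Re s) * (11523/10000)" .
  moreover have "1 < Re s"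
    using assms by simp
  ultimately show ?thesis
    using norm_zeta_minus_partial_le_trivial[of s M] assms(3) by linarith
qed

lemma norm_zeta_minus_partial_le_const:
  assumes "1/2 \<le> Re s" "14.1347 \<le> Im s" "Im s \<le> real M" "real M < Im s + 1"
  shows "norm (riemann_zeta s - (\<Sum>n\<in>{1..<M}. nat_powr_neg s n)) \<le> 2.1946 * real M powr (- Re s)"
proof (cases "Re s \<le> Im s")
  case True
  then have "norm (riemann_zeta s - (\<Sum>n\<in>{1..<M}. nat_powr_neg s n)) \<le> 201/100 * real M powr (- Re s)"
    using assms by (intro zeta_tail_bound_moderate_sigma) auto
  then show ?thesis
    by (rule order_trans) (intro mult_right_mono, simp_all)
next
  case False
  then have "norm (riemann_zeta s - (\<Sum>n\<in>{1..<M}. nat_powr_neg s n)) \<le> 21523/10000 * real M powr (- Re s)"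
    using assms by (intro zeta_tail_bound_large_sigma) auto
  then show ?thesis
    by (rule order_trans) (intro mult_right_mono, simp_all)
qed

lemma sum_real_less_eq_sum_nat_ceiling:
  "(\<Sum>n\<in>{n::nat. 1 \<le> n \<and> real n < t}. 1 / (of_nat n powr s)) = (\<Sum>n\<in>{1..<nat \<lceil>t\<rceil>}. nat_powr_neg s n)"
proof -
  have "{n::nat. 1 \<le> n \<and> real n < t} = {1..<nat \<lceil>t\<rceil>}"
    using nat_ceiling_le_eq[of t] by (auto simp flip: not_le)
  then show ?thesis
    by (simp add: one_div_of_nat_powr)
qed

theorem mainTheorem3:
  fixes \<sigma> t :: real
  assumes "\<sigma> \<ge> 1/2" and "t \<ge> 14.1347"
  shows "cmod (riemann_zeta (Complex \<sigma> t)
            - (\<Sum>n\<in>{n::nat. 1 \<le> n \<and> real n < t}. 1 / (of_nat n powr (Complex \<sigma> t))))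
         \<le> 2.1946 * t powr (-\<sigma>)"
proof -
  define M where "M = nat \<lceil>t\<rceil>"
  have M: "t \<le> real M" "real M < t + 1"
    using assms ceiling_correct[of t] by (auto simp: M_def)
  have "cmod (riemann_zeta (Complex \<sigma> t) - (\<Sum>n\<in>{1..<M}. nat_powr_neg (Complex \<sigma> t) n))
      \<le> 2.1946 * real M powr (- \<sigma>)"
    using norm_zeta_minus_partial_le_const[of "Complex \<sigma> t" M] assms M by simp
  also have "\<dots> \<le> 2.1946 * t powr (- \<sigma>)"
    using assms M by (simp add: powr_mono2')
  finally show ?thesis
    unfolding sum_real_less_eq_sum_nat_ceiling M_def .
qed

end
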